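(* Let $N\ge3$. For any $a\in\mathbb{R}^N$, $r>0$ and $u\in\mathcal{D}^{1,2}(\mathbb{R}^N)$, $$\lim_{y\to a}\int_{B(y,r)}\frac{u^2(x)}{|x-y|^2}dx=\int_{B(a,r)}\frac{u^2(x)}{|x-a|^2}dx.$$
   Context: $\mathcal{D}^{1,2}(\mathbb{R}^N)$ is the completion of $C_c^\infty(\mathbb{R}^N)$ with respect to the norm $(\int_{\mathbb{R}^N}|\nabla u|^2dx)^{1/2}$; $B(a,r)$ is the open ball of center $a$ and radius $r$. *)

theory Defs
  imports "HOL-Analysis.Analysis"
begin

fun Ck :: "nat \<Rightarrow> ('a::euclidean_space \<Rightarrow> real) \<Rightarrow> bool" where
  "Ck 0 f = continuous_on UNIV f"
| "Ck (Suc k) f = (\<exists>f'. (\<forall>x. (f has_derivative f' x) (at x)) \<and> (\<forall>v. Ck k (\<lambda>x. f' x v)))"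

definition smooth :: "('a::euclidean_space \<Rightarrow> real) \<Rightarrow> bool" where
  "smooth f \<longleftrightarrow> (\<forall>k. Ck k f)"

definition Cc_inf :: "('a::euclidean_space \<Rightarrow> real) set" where
  "Cc_inf = {f. smooth f \<and> compact (closure {x. f x \<noteq> 0})}"

definition dirichlet :: "('a::euclidean_space \<Rightarrow> real) \<Rightarrow> real" where
  "dirichlet f = (\<integral>x. (\<Sum>b\<in>Basis. (frechet_derivative f (at x) b)^2) \<partial>lebesgue)"

text \<open>D^{1,2}(R^N), N \<ge> 3: the completion of C_c^\<infinity> w.r.t. the norm (\<integral>|\<nabla>u|^2)^(1/2),
  realised (as usual, via the Sobolev inequality) as the measurable functions u that are
  L^{2^*}-limits (2^* = 2N/(N-2)) of sequences in C_c^\<infinity> which are Cauchy in the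
  gradient norm.\<close>
definition D12 :: "('a::euclidean_space \<Rightarrow> real) set" where
  "D12 = {u. u \<in> borel_measurable lebesgue \<and>
     (\<exists>\<phi>::nat \<Rightarrow> 'a \<Rightarrow> real. (\<forall>n. \<phi> n \<in> Cc_inf) \<and>
        (\<forall>e>0. \<exists>M. \<forall>m\<ge>M. \<forall>n\<ge>M. dirichlet (\<lambda>x. \<phi> m x - \<phi> n x) < e) \<and>
        ((\<lambda>n. \<integral>\<^sup>+ x. ennreal (\<bar>\<phi> n x - u x\<bar> powr (2 * real DIM('a) / (real DIM('a) - 2))) \<partial>lebesgue)
           \<longlonglongrightarrow> 0))}"

end

theory Submission
  imports Defs
begin

(* The weight |x - y|^-2 is controlled by Hardy's inequality
     \<integral> \<psi>^2/|x - y|^2 \<le> (2/(N - 2))^2 \<integral> |\<nabla>\<psi>|^2,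
   uniformly in the centre y. For compactly supported C^1 functions \<psi> and |x - y|^2 + \<epsilon> in
   place of |x - y|^2 it follows by integrating a pointwise lower bound for the divergence of
   the field \<psi>^2 (x - y)/(|x - y|^2 + \<epsilon>), whose integral vanishes. Fatou's lemma removes \<epsilon>
   and passes to the limit u of test functions \<phi>_m defining u in D^{1,2}, so that
   \<integral> (u - \<phi>_m)^2/|x - y|^2 \<rightarrow> 0 uniformly in y. For a bounded continuous \<phi>_m the integral
   over B(y, r) is continuous in y: translated to B(0, r) this is dominated convergence, since
   |z|^-2 is integrable near 0 when N \<ge> 3. Hence y \<mapsto> \<integral>_{B(y,r)} u^2/|x - y|^2 is a uniform
   limit of continuous functions. *)

lemma integral_lborel_translate:
  fixes f :: "'a::euclidean_space \<Rightarrow> real"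
  assumes "f \<in> borel_measurable borel"
  shows "(\<integral>x. f (c + x) \<partial>lborel) = (\<integral>x. f x \<partial>lborel)"
proof -
  have "(\<integral>x. f (c + x) \<partial>lborel) = (\<integral>x. f x \<partial>distr lborel borel ((+) c))"
    using assms by (intro integral_distr[symmetric]) auto
  then show ?thesis by (simp add: lborel_distr_plus)
qed

lemma integrable_lborel_translate_iff:
  fixes f :: "'a::euclidean_space \<Rightarrow> real"
  assumes "f \<in> borel_measurable borel"
  shows "integrable lborel (\<lambda>x. f (c + x)) \<longleftrightarrow> integrable lborel f"
proof -
  have "integrable lborel (\<lambda>x. f (c + x)) \<longleftrightarrow> integrable (distr lborel borel ((+) c)) f"
    using assms by (intro integrable_distr_eq[symmetric]) auto
  then show ?thesis by (simp add: lborel_distr_plus)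
qed

lemma indicator_ball_translate:
  fixes y z :: "'a::real_normed_vector"
  shows "indicator (ball y r) (y + z) = indicator (ball 0 r) z"
  by (simp add: indicator_def dist_norm)

lemma
  fixes g :: "'a::euclidean_space \<Rightarrow> real"
  assumes [measurable]: "g \<in> borel_measurable borel"
  shows set_integrable_ball_translate_iff:
      "set_integrable lebesgue (ball y r) g \<longleftrightarrow> set_integrable lborel (ball 0 r) (\<lambda>z. g (y + z))"
    and set_integral_ball_translate:
      "(\<integral>x\<in>ball y r. g x \<partial>lebesgue) = (\<integral>z\<in>ball 0 r. g (y + z) \<partial>lborel)"
proof -
  have [measurable]: "ball y r \<in> sets borel"
    by simp
  have [measurable]: "(\<lambda>x. indicator (ball y r) x *\<^sub>R g x) \<in> borel_measurable borel"
    by measurable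
  show "set_integrable lebesgue (ball y r) g \<longleftrightarrow> set_integrable lborel (ball 0 r) (\<lambda>z. g (y + z))"
    unfolding set_integrable_def
    by (simp add: integrable_completion integrable_lborel_translate_iff[symmetric, where c = y]
        indicator_ball_translate)
  show "(\<integral>x\<in>ball y r. g x \<partial>lebesgue) = (\<integral>z\<in>ball 0 r. g (y + z) \<partial>lborel)"
    unfolding set_lebesgue_integral_def
    by (simp add: integral_completion integral_lborel_translate[symmetric, where c = y]
        indicator_ball_translate)
qed

lemma borel_measurable_lebesgue_ident:
  "(\<lambda>x. x) \<in> borel_measurable (lebesgue :: 'a::euclidean_space measure)"
  by (rule measurable_completion) simp

lemma integrable_continuous_compact_support:
  fixes f :: "'a::euclidean_space \<Rightarrow> real"
  assumes "continuous_on UNIV f" "compact K" "\<And>x. x \<notin> K \<Longrightarrow> f x = 0"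
  shows "integrable lborel f"
proof -
  have "integrable lborel (\<lambda>x. indicator K x *\<^sub>R f x)"
    using assms by (intro borel_integrable_compact) (auto intro: continuous_on_subset)
  moreover have "(\<lambda>x. indicator K x *\<^sub>R f x) = f"
    using assms(3) by (auto simp: indicator_def fun_eq_iff)
  ultimately show ?thesis by simp
qed

lemma continuous_compact_support_bounded:
  fixes f :: "'a::topological_space \<Rightarrow> real"
  assumes "continuous_on UNIV f" and "compact K" and supp: "\<And>x. x \<notin> K \<Longrightarrow> f x = 0"
  obtains B where "\<And>x. \<bar>f x\<bar> \<le> B"
proof -
  obtain B where B: "\<And>x. x \<in> K \<Longrightarrow> \<bar>f x\<bar> \<le> B"
    using compact_imp_bounded[OF compact_continuous_image[OF
          continuous_on_subset[OF assms(1) subset_UNIV] \<open>compact K\<close>]]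
    by (auto simp: bounded_iff)
  have "\<bar>f x\<bar> \<le> max B 0" for x
    using B[of x] supp[of x] by (cases "x \<in> K") auto
  then show thesis
    using that by blast
qed

lemma nn_integral_le_of_AE_le_liminf:
  fixes f :: "nat \<Rightarrow> 'a \<Rightarrow> ennreal"
  assumes "\<And>n. f n \<in> borel_measurable M" and "AE x in M. g x \<le> liminf (\<lambda>n. f n x)"
    and "\<forall>\<^sub>F n in sequentially. (\<integral>\<^sup>+x. f n x \<partial>M) \<le> c"
  shows "(\<integral>\<^sup>+x. g x \<partial>M) \<le> c"
proof -
  have "(\<integral>\<^sup>+x. g x \<partial>M) \<le> (\<integral>\<^sup>+x. liminf (\<lambda>n. f n x) \<partial>M)"
    using assms(2) by (rule nn_integral_mono_AE)
  also have "\<dots> \<le> liminf (\<lambda>n. \<integral>\<^sup>+x. f n x \<partial>M)"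
    using assms(1) by (rule nn_integral_liminf)
  also have "\<dots> \<le> c"
    by (intro Liminf_le assms(3)) simp
  finally show ?thesis .
qed

lemma Lp_convergence_imp_AE_subseq:
  fixes u :: "'a \<Rightarrow> real" and \<phi> :: "nat \<Rightarrow> 'a \<Rightarrow> real"
  assumes "p > 0" and [measurable]: "u \<in> borel_measurable M" "\<And>n. \<phi> n \<in> borel_measurable M"
    and lim: "(\<lambda>n. \<integral>\<^sup>+x. ennreal (\<bar>\<phi> n x - u x\<bar> powr p) \<partial>M) \<longlonglongrightarrow> 0"
  obtains r where "strict_mono r" and "AE x in M. (\<lambda>n. \<phi> (r n) x) \<longlonglongrightarrow> u x"
proof -
  define I where "I n = (\<integral>\<^sup>+x. ennreal (\<bar>\<phi> n x - u x\<bar> powr p) \<partial>M)" for n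
  obtain N where N: "\<And>n. n \<ge> N \<Longrightarrow> I n < 1"
    using order_tendstoD(2)[OF lim, of 1] by (auto simp: I_def eventually_sequentially)
  define e where "e n x = \<bar>\<phi> (n + N) x - u x\<bar> powr p" for n x
  have e_int: "integrable M (e n)" for n
  proof (rule integrableI_bounded)
    show "(\<integral>\<^sup>+x. ennreal (norm (e n x)) \<partial>M) < \<infinity>"
      using N[of "n + N"] by (simp add: e_def I_def) (metis ennreal_1 ennreal_less_top order.strict_trans)
  qed (unfold e_def, measurable)
  have "(\<lambda>n. I (n + N)) \<longlonglongrightarrow> ennreal 0"
    using LIMSEQ_ignore_initial_segment[OF lim, of N] by (simp add: I_def)
  then have "(\<lambda>n. enn2real (I (n + N))) \<longlonglongrightarrow> 0"
    by (rule tendsto_enn2real) simp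
  moreover have "(\<integral>x. norm (e n x) \<partial>M) = enn2real (I (n + N))" for n
    unfolding I_def e_def by (simp add: integral_eq_nn_integral)
  ultimately have "(\<lambda>n. \<integral>x. norm (e n x) \<partial>M) \<longlonglongrightarrow> 0"
    by simp
  then obtain r where "strict_mono r" and e_lim: "AE x in M. (\<lambda>n. e (r n) x) \<longlonglongrightarrow> 0"
    using tendsto_L1_AE_subseq[where u = e, OF e_int] by blast
  have "AE x in M. (\<lambda>n. \<phi> (r n + N) x) \<longlonglongrightarrow> u x"
    using e_lim
  proof eventually_elim
    case (elim x)
    have "(\<lambda>n. e (r n) x powr (1 / p)) \<longlonglongrightarrow> 0"
      using \<open>p > 0\<close> by (intro tendsto_zero_powrI[OF elim tendsto_const]) (auto simp: e_def)
    then have "(\<lambda>n. \<bar>\<phi> (r n + N) x - u x\<bar>) \<longlonglongrightarrow> 0"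
      using \<open>p > 0\<close> by (simp add: e_def powr_powr)
    then show ?case
      by (simp add: tendsto_rabs_zero_iff LIM_zero_iff)
  qed
  moreover have "strict_mono (\<lambda>n. r n + N)"
    using \<open>strict_mono r\<close> by (simp add: strict_mono_def)
  ultimately show thesis
    using that by blast
qed

lemma set_integral_abs_diff_le:
  fixes V W E :: "'a \<Rightarrow> real"
  assumes V_meas: "set_borel_measurable M A V"
    and W_int: "set_integrable M A W" and E_int: "set_integrable M A E"
    and pointwise: "\<And>x. \<bar>V x - W x\<bar> \<le> t * W x + c * E x"
  shows "set_integrable M A V"
    and "\<bar>(\<integral>x\<in>A. V x \<partial>M) - (\<integral>x\<in>A. W x \<partial>M)\<bar> \<le> t * (\<integral>x\<in>A. W x \<partial>M) + c * (\<integral>x\<in>A. E x \<partial>M)"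
proof -
  define R where "R x = t * W x + c * E x" for x
  have R_int: "set_integrable M A R"
    unfolding R_def using W_int E_int by (intro set_integral_add(1) set_integrable_mult_right)
  have V_le: "V x \<le> W x + R x" and W_le: "W x \<le> V x + R x" for x
    using pointwise[of x] by (auto simp: R_def abs_le_iff)
  show V_int: "set_integrable M A V"
  proof (rule set_integrable_bound[OF set_integral_add(1)[OF set_integrable_abs set_integrable_abs] V_meas])
    have "norm (V x) \<le> norm (\<bar>W x\<bar> + \<bar>R x\<bar>)" for x
      using V_le[of x] W_le[of x] by (auto simp: abs_if)
    then show "AE x in M. x \<in> A \<longrightarrow> norm (V x) \<le> norm (\<bar>W x\<bar> + \<bar>R x\<bar>)"
      by simp
  qed (fact W_int R_int)+
  have "(\<integral>x\<in>A. V x \<partial>M) \<le> (\<integral>x\<in>A. W x + R x \<partial>M)"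
    by (rule set_integral_mono[OF V_int set_integral_add(1)[OF W_int R_int] V_le])
  moreover have "(\<integral>x\<in>A. W x \<partial>M) \<le> (\<integral>x\<in>A. V x + R x \<partial>M)"
    by (rule set_integral_mono[OF W_int set_integral_add(1)[OF V_int R_int] W_le])
  moreover have "(\<integral>x\<in>A. R x \<partial>M) = t * (\<integral>x\<in>A. W x \<partial>M) + c * (\<integral>x\<in>A. E x \<partial>M)"
    unfolding R_def
    by (simp add: set_integral_add(2)[OF set_integrable_mult_right[OF W_int] set_integrable_mult_right[OF E_int]])
  ultimately show "\<bar>(\<integral>x\<in>A. V x \<partial>M) - (\<integral>x\<in>A. W x \<partial>M)\<bar> \<le> t * (\<integral>x\<in>A. W x \<partial>M) + c * (\<integral>x\<in>A. E x \<partial>M)"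
    by (simp add: set_integral_add(2) V_int W_int R_int abs_le_iff)
qed

section \<open>Local integrability of the inverse powers of the norm\<close>

lemma dyadic_interval_index:
  fixes t r :: real
  assumes "0 < t" "t < r"
  obtains k :: nat where "r / 2 ^ Suc k \<le> t" "t < r / 2 ^ k"
proof -
  obtain n :: nat where "(1 / 2) ^ n < t / r"
    using real_arch_pow_inv[of "t / r" "1 / 2"] assms by auto
  then have ex: "\<exists>k::nat. r / 2 ^ Suc k \<le> t"
    using assms by (intro exI[of _ n]) (auto simp: field_simps power_divide)
  define k where "k = (LEAST k::nat. r / 2 ^ Suc k \<le> t)"
  have "r / 2 ^ Suc k \<le> t"
    unfolding k_def by (rule LeastI_ex[OF ex])
  moreover have "t < r / 2 ^ k"
  proof (cases k)
    case (Suc j)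
    then show ?thesis
      using not_less_Least[of j "\<lambda>k. r / 2 ^ Suc k \<le> t"] unfolding k_def by simp
  qed (use assms in simp)
  ultimately show ?thesis using that by blast
qed

lemma inverse_power_norm_le_dyadic_sum:
  fixes z :: "'a::real_normed_vector" and r :: real and p :: nat
  assumes "z \<noteq> 0" and "r > 0"
  shows "ennreal (indicator (ball 0 r) z / norm z ^ p)
    \<le> (\<Sum>k. ennreal ((2 ^ Suc k / r) ^ p) * indicator (ball 0 (r / 2 ^ k)) z)"
proof (cases "z \<in> ball 0 r")
  case True
  define g where "g k = ennreal ((2 ^ Suc k / r) ^ p) * indicator (ball 0 (r / 2 ^ k)) z" for k
  obtain k where k: "r / 2 ^ Suc k \<le> norm z" "norm z < r / 2 ^ k"
    using dyadic_interval_index[of "norm z" r] True \<open>z \<noteq> 0\<close> by auto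
  have "1 / norm z ^ p \<le> 1 / (r / 2 ^ Suc k) ^ p"
    using k \<open>z \<noteq> 0\<close> \<open>r > 0\<close> by (intro divide_left_mono power_mono) auto
  also have "\<dots> = (2 ^ Suc k / r) ^ p"
    by (simp add: power_divide)
  finally have "ennreal (indicator (ball 0 r) z / norm z ^ p) \<le> ennreal ((2 ^ Suc k / r) ^ p)"
    using True by (intro ennreal_leI) simp
  also have "\<dots> = g k"
    using k by (simp add: g_def)
  also have "\<dots> \<le> (\<Sum>k. g k)"
    using sum_le_suminf[of g "{k}"] by simp
  finally show ?thesis
    unfolding g_def .
qed (auto simp: indicator_def)

lemma nn_integral_dyadic_ball:
  fixes r :: real and p k :: nat
  assumes "r > 0"
  defines "V \<equiv> measure lborel (ball (0::'a::euclidean_space) 1)"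
  shows "(\<integral>\<^sup>+z. ennreal ((2 ^ Suc k / r) ^ p) * indicator (ball (0::'a) (r / 2 ^ k)) z \<partial>lborel)
    = ennreal (2 ^ p * r ^ DIM('a) / r ^ p * V * (2 ^ p / 2 ^ DIM('a)) ^ k)"
proof -
  have "emeasure lborel (ball (0::'a) (r / 2 ^ k)) = ennreal (measure lborel (ball (0::'a) (r / 2 ^ k)))"
    using emeasure_bounded_finite[of "ball (0::'a) (r / 2 ^ k)"]
    by (intro emeasure_eq_ennreal_measure) auto
  also have "measure lborel (ball (0::'a) (r / 2 ^ k)) = (r / 2 ^ k) ^ DIM('a) * V"
    unfolding V_def using \<open>r > 0\<close> by (intro content_ball_conv_unit_ball) simp
  finally have ball_measure: "emeasure lborel (ball (0::'a) (r / 2 ^ k)) = ennreal ((r / 2 ^ k) ^ DIM('a) * V)" .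
  have "(\<integral>\<^sup>+z. ennreal ((2 ^ Suc k / r) ^ p) * indicator (ball (0::'a) (r / 2 ^ k)) z \<partial>lborel)
      = ennreal ((2 ^ Suc k / r) ^ p) * ennreal ((r / 2 ^ k) ^ DIM('a) * V)"
    by (simp add: nn_integral_cmult_indicator ball_measure)
  also have "\<dots> = ennreal ((2 ^ Suc k / r) ^ p * ((r / 2 ^ k) ^ DIM('a) * V))"
    using \<open>r > 0\<close> by (simp add: V_def ennreal_mult)
  also have "(2 ^ Suc k / r) ^ p * ((r / 2 ^ k) ^ DIM('a) * V)
      = 2 ^ p * r ^ DIM('a) / r ^ p * V * (2 ^ p / 2 ^ DIM('a)) ^ k"
    by (simp add: power_divide power_mult_distrib flip: power_mult)
      (simp add: power_mult mult.commute[of k])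
  finally show ?thesis .
qed

lemma nn_integral_ball_inverse_power_finite:
  fixes r :: real and p :: nat
  assumes "p < DIM('a::euclidean_space)"
  shows "(\<integral>\<^sup>+z. ennreal (indicator (ball (0::'a) r) z / norm z ^ p) \<partial>lborel) < \<infinity>"
proof (cases "r > 0")
  case False
  then have "indicator (ball (0::'a) r) = (\<lambda>_. 0 :: real)"
    by (auto simp: indicator_def fun_eq_iff dest: order.strict_trans1[OF norm_ge_zero])
  then show ?thesis
    by simp
next
  case True
  define V where "V = measure lborel (ball (0::'a) 1)"
  have [measurable]: "ball (0::'a) s \<in> sets borel" for s
    by simp
  have "(\<integral>\<^sup>+z. ennreal (indicator (ball (0::'a) r) z / norm z ^ p) \<partial>lborel)
      \<le> (\<integral>\<^sup>+z. (\<Sum>k. ennreal ((2 ^ Suc k / r) ^ p) * indicator (ball (0::'a) (r / 2 ^ k)) z) \<partial>lborel)"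
    using AE_lborel_singleton[of 0]
    by (rule nn_integral_mono_AE[OF eventually_mono])
      (rule inverse_power_norm_le_dyadic_sum[OF _ \<open>r > 0\<close>])
  also have "\<dots> = (\<Sum>k. \<integral>\<^sup>+z. ennreal ((2 ^ Suc k / r) ^ p) * indicator (ball (0::'a) (r / 2 ^ k)) z \<partial>lborel)"
    by (rule nn_integral_suminf) measurable
  also have "\<dots> = (\<Sum>k. ennreal (2 ^ p * r ^ DIM('a) / r ^ p * V * (2 ^ p / 2 ^ DIM('a)) ^ k))"
    unfolding nn_integral_dyadic_ball[OF \<open>r > 0\<close>] V_def ..
  also have "\<dots> < \<infinity>"
  proof -
    have "(2::real) ^ p / 2 ^ DIM('a) < 1"
      using assms by (simp add: power_strict_increasing)
    then have "summable (\<lambda>k. 2 ^ p * r ^ DIM('a) / r ^ p * V * (2 ^ p / 2 ^ DIM('a) :: real) ^ k)"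
      by (intro summable_mult summable_geometric) simp
    then show ?thesis
      using \<open>r > 0\<close> by (subst suminf_ennreal2) (auto simp: V_def)
  qed
  finally show ?thesis .
qed

lemma set_integrable_ball_inverse_power:
  fixes p :: nat
  assumes "p < DIM('a::euclidean_space)"
  shows "set_integrable lborel (ball (0::'a) r) (\<lambda>z. 1 / norm z ^ p)"
  unfolding set_integrable_def
proof (rule integrableI_bounded)
  show "(\<lambda>z. indicator (ball (0::'a) r) z *\<^sub>R (1 / norm z ^ p)) \<in> borel_measurable lborel"
    by (intro borel_measurable_scaleR borel_measurable_indicator) auto
  have "(\<lambda>z. ennreal (norm (indicator (ball (0::'a) r) z *\<^sub>R (1 / norm z ^ p))))
      = (\<lambda>z. ennreal (indicator (ball (0::'a) r) z / norm z ^ p))"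
    by (auto simp: indicator_def fun_eq_iff)
  then show "(\<integral>\<^sup>+z. ennreal (norm (indicator (ball (0::'a) r) z *\<^sub>R (1 / norm z ^ p))) \<partial>lborel) < \<infinity>"
    using nn_integral_ball_inverse_power_finite[OF assms, of r] by simp
qed

section \<open>Hardy's inequality for compactly supported C1 functions\<close>

lemma has_field_derivative_along_line:
  fixes f :: "'a::real_normed_vector \<Rightarrow> real"
  assumes "(f has_derivative f') (at x)"
  shows "((\<lambda>t. f (x + t *\<^sub>R b)) has_real_derivative f' b) (at 0)"
proof -
  have "((\<lambda>t. x + t *\<^sub>R b) has_derivative (\<lambda>t. t *\<^sub>R b)) (at 0)"
    by (auto intro!: derivative_eq_intros)
  moreover have "(f has_derivative f') (at (x + 0 *\<^sub>R b))"
    using assms by simp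
  ultimately have "((\<lambda>t. f (x + t *\<^sub>R b)) has_derivative (\<lambda>t. f' (t *\<^sub>R b))) (at 0)"
    by (rule has_derivative_compose)
  moreover have "(\<lambda>t. f' (t *\<^sub>R b)) = (\<lambda>t. f' b * t)"
    using linear.scaleR[OF has_derivative_linear[OF assms]] by (auto simp: fun_eq_iff)
  ultimately show ?thesis
    by (simp add: has_field_derivative_def)
qed

lemma abs_difference_quotient_le:
  fixes g D :: "'a::real_normed_vector \<Rightarrow> real"
  assumes deriv: "\<And>x. ((\<lambda>s. g (x + s *\<^sub>R b)) has_real_derivative D x) (at 0)"
    and bound: "\<And>x. \<bar>D x\<bar> \<le> M" and "t > 0"
  shows "\<bar>(g (x + t *\<^sub>R b) - g x) / t\<bar> \<le> M"
proof -
  have "((\<lambda>s. g (x + s *\<^sub>R b)) has_real_derivative D (x + s *\<^sub>R b)) (at s)" for s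
    using DERIV_shift[of "\<lambda>s. g (x + s *\<^sub>R b)" _ 0 s] deriv[of "x + s *\<^sub>R b"]
    by (simp add: algebra_simps)
  then obtain s where "g (x + t *\<^sub>R b) - g (x + 0 *\<^sub>R b) = (t - 0) * D (x + s *\<^sub>R b)"
    using MVT2[of 0 t "\<lambda>s. g (x + s *\<^sub>R b)" "\<lambda>s. D (x + s *\<^sub>R b)"] \<open>t > 0\<close> by blast
  then show ?thesis
    using bound[of "x + s *\<^sub>R b"] \<open>t > 0\<close> by simp
qed

lemma notin_subset_cball_translate:
  fixes x b :: "'a::real_normed_vector"
  assumes "K \<subseteq> cball 0 R" and "norm x > R + norm b" and "\<bar>t\<bar> \<le> 1"
  shows "x \<notin> K" and "x + t *\<^sub>R b \<notin> K"
proof -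
  have "norm (x + t *\<^sub>R b) \<ge> norm x - norm b"
    using norm_triangle_ineq2[of x "- (t *\<^sub>R b)"] mult_left_le_one_le[of "norm b" "\<bar>t\<bar>"] assms(3)
    by simp
  then have "norm x > R" "norm (x + t *\<^sub>R b) > R"
    using assms(2) norm_ge_zero[of b] by linarith+
  then show "x \<notin> K" "x + t *\<^sub>R b \<notin> K"
    using assms(1) by auto
qed

lemma integral_directional_derivative_eq_0:
  fixes g D :: "'a::euclidean_space \<Rightarrow> real"
  assumes g_cont: "continuous_on UNIV g" and D_cont: "continuous_on UNIV D"
    and "compact K" and g_supp: "\<And>x. x \<notin> K \<Longrightarrow> g x = 0" and D_supp: "\<And>x. x \<notin> K \<Longrightarrow> D x = 0"
    and deriv: "\<And>x. ((\<lambda>t. g (x + t *\<^sub>R b)) has_real_derivative D x) (at 0)"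
  shows "(\<integral>x. D x \<partial>lborel) = 0"
proof -
  obtain R where R: "K \<subseteq> cball 0 R"
    using compact_imp_bounded[OF \<open>compact K\<close>] unfolding bounded_iff
    by (metis mem_cball_0 subsetI)
  obtain M where M: "\<And>x. \<bar>D x\<bar> \<le> M"
    using continuous_compact_support_bounded[OF D_cont \<open>compact K\<close> D_supp] by blast
  have g_meas: "g \<in> borel_measurable borel"
    using g_cont by (rule borel_measurable_continuous_onI)
  have g_int: "integrable lborel g"
    by (rule integrable_continuous_compact_support[OF g_cont \<open>compact K\<close> g_supp])
  define t :: "nat \<Rightarrow> real" where "t n = inverse (Suc n)" for n
  have t: "0 < t n" "t n \<le> 1" for n
    by (auto simp: t_def field_simps)
  define h where "h n x = (g (x + t n *\<^sub>R b) - g x) / t n" for n x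
  have "(\<integral>x. h n x \<partial>lborel) = 0" for n
    using integral_lborel_translate[OF g_meas, of "t n *\<^sub>R b"]
      integrable_lborel_translate_iff[OF g_meas, of "t n *\<^sub>R b"] g_int
    by (simp add: h_def add.commute)
  moreover have "(\<lambda>n. \<integral>x. h n x \<partial>lborel) \<longlonglongrightarrow> (\<integral>x. D x \<partial>lborel)"
  proof (rule integral_dominated_convergence[where w = "\<lambda>x. M * indicator (cball 0 (R + norm b)) x"])
    show "D \<in> borel_measurable lborel"
      using D_cont by (simp add: borel_measurable_continuous_onI)
    show "h n \<in> borel_measurable lborel" for n
      unfolding h_def using g_meas by measurable
    show "integrable lborel (\<lambda>x. M * indicator (cball 0 (R + norm b)) x)"
      using emeasure_bounded_finite[of "cball 0 (R + norm b)"]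
      by (intro integrable_mult_right integrable_real_indicator) auto
    show "AE x in lborel. (\<lambda>n. h n x) \<longlonglongrightarrow> D x"
    proof (intro AE_I2)
      fix x
      have "((\<lambda>s. (g (x + s *\<^sub>R b) - g x) / s) \<longlongrightarrow> D x) (at 0)"
        using deriv[of x] by (simp add: has_field_derivative_iff)
      moreover have "filterlim t (at 0) sequentially"
        using t unfolding t_def by (intro filterlim_atI LIMSEQ_inverse_real_of_nat) auto
      ultimately show "(\<lambda>n. h n x) \<longlonglongrightarrow> D x"
        unfolding h_def by (rule filterlim_compose)
    qed
    show "AE x in lborel. norm (h n x) \<le> M * indicator (cball 0 (R + norm b)) x" for n
    proof (intro AE_I2)
      fix x
      show "norm (h n x) \<le> M * indicator (cball 0 (R + norm b)) x"
      proof (cases "x \<in> cball 0 (R + norm b)")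
        case True
        then show ?thesis
          using abs_difference_quotient_le[OF deriv M t(1)] by (simp add: h_def)
      next
        case False
        then have "x \<notin> K" "x + t n *\<^sub>R b \<notin> K"
          using notin_subset_cball_translate[OF R, where x = x and b = b and t = "t n"] t[of n] by auto
        then show ?thesis
          using False by (simp add: h_def g_supp)
      qed
    qed
  qed
  ultimately show ?thesis
    by (simp add: LIMSEQ_const_iff)
qed

lemma has_derivative_eq_0_outside_closed:
  fixes f :: "'a::real_normed_vector \<Rightarrow> real"
  assumes "(f has_derivative f') (at x)" and "closed K" and "x \<notin> K" and "\<And>z. z \<notin> K \<Longrightarrow> f z = 0"
  shows "f' = (\<lambda>_. 0)"
proof -
  have "((\<lambda>_. 0) has_derivative (\<lambda>_. 0)) (at x)"
    by simp
  then have "(f has_derivative (\<lambda>_. 0)) (at x)"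
    by (rule has_derivative_transform_within_open[where s = "- K"]) (use assms in auto)
  with assms(1) show ?thesis
    by (rule has_derivative_unique)
qed

lemma has_field_derivative_hardy_field:
  fixes \<psi> :: "'a::euclidean_space \<Rightarrow> real" and x y b :: 'a and \<epsilon> :: real
  assumes "(\<psi> has_derivative \<psi>') (at x)" and "b \<in> Basis" and "\<epsilon> > 0"
  defines "d \<equiv> (norm (x - y)) ^ 2 + \<epsilon>"
  shows "((\<lambda>t. \<psi> (x + t *\<^sub>R b) ^ 2 * ((x + t *\<^sub>R b - y) \<bullet> b / ((norm (x + t *\<^sub>R b - y)) ^ 2 + \<epsilon>)))
    has_real_derivative
      2 * \<psi> x * \<psi>' b * ((x - y) \<bullet> b / d) + \<psi> x ^ 2 * (1 / d - 2 * ((x - y) \<bullet> b) ^ 2 / d ^ 2)) (at 0)"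
proof -
  define c where "c = (x - y) \<bullet> b"
  have "d > 0"
    unfolding d_def using \<open>\<epsilon> > 0\<close> by (simp add: add_nonneg_pos)
  have line: "(x + t *\<^sub>R b - y) \<bullet> b = c + t" "(norm (x + t *\<^sub>R b - y)) ^ 2 + \<epsilon> = d + 2 * t * c + t ^ 2"
    for t
  proof -
    have "x + t *\<^sub>R b - y = (x - y) + t *\<^sub>R b"
      by simp
    moreover have "b \<bullet> b = 1"
      using \<open>b \<in> Basis\<close> by simp
    ultimately show "(x + t *\<^sub>R b - y) \<bullet> b = c + t"
      and "(norm (x + t *\<^sub>R b - y)) ^ 2 + \<epsilon> = d + 2 * t * c + t ^ 2"
      by (simp_all only: c_def d_def power2_norm_eq_inner inner_add_left inner_add_right
          inner_scaleR_left inner_scaleR_right inner_commute[of b "x - y"])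
        (simp_all add: power2_eq_square algebra_simps)
  qed
  have "((\<lambda>t. \<psi> (x + t *\<^sub>R b) ^ 2 * ((c + t) / (d + 2 * t * c + t ^ 2))) has_real_derivative
      2 * \<psi> x * \<psi>' b * (c / d) + \<psi> x ^ 2 * (1 / d - 2 * c ^ 2 / d ^ 2)) (at 0)"
  proof -
    have num: "((\<lambda>t. c + t) has_real_derivative 1) (at 0)"
      and den: "((\<lambda>t. d + 2 * t * c + t ^ 2) has_real_derivative 2 * c) (at 0)"
      by (auto intro!: derivative_eq_intros)
    have "d + 2 * 0 * c + 0 ^ 2 \<noteq> 0"
      using \<open>d > 0\<close> by simp
    from DERIV_mult[OF DERIV_power[OF has_field_derivative_along_line[OF assms(1), of b], of 2]
        DERIV_divide[OF num den this]]
    show ?thesis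
      by (rule DERIV_cong) (use \<open>d > 0\<close> in \<open>simp add: divide_simps power2_eq_square\<close>)
  qed
  then show ?thesis
    unfolding line c_def .
qed

(* With I = Basis, p = \<psi> x, a b = \<partial>\<^sub>b\<psi> x and c b = (x - y)\<^sub>b the right-hand side is the
   divergence of the field \<psi>\<^sup>2 (x - y)/(|x - y|\<^sup>2 + \<epsilon>); l = (N - 2)/2 gives the sharp constant. *)
lemma hardy_divergence_lower_bound:
  fixes a c :: "'b \<Rightarrow> real" and p l \<epsilon> :: real
  assumes "finite I" and "real (card I) = 2 * l + 2" and "l > 0" and "\<epsilon> > 0"
  defines "d \<equiv> (\<Sum>b\<in>I. (c b) ^ 2) + \<epsilon>"
  shows "l * (p ^ 2 / d) - (1 / l) * (\<Sum>b\<in>I. (a b) ^ 2)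
    \<le> (\<Sum>b\<in>I. 2 * p * a b * (c b / d) + p ^ 2 * (1 / d - 2 * (c b) ^ 2 / d ^ 2))"
proof -
  define s where "s = (\<Sum>b\<in>I. (c b) ^ 2)"
  have d: "d = s + \<epsilon>"
    by (simp add: d_def s_def)
  have "d > 0"
    unfolding d s_def using \<open>\<epsilon> > 0\<close> by (simp add: add_nonneg_pos sum_nonneg)
  have "(l + 2) * s / d ^ 2 \<le> (l + 2) * d / d ^ 2"
    using \<open>l > 0\<close> \<open>\<epsilon> > 0\<close> by (intro divide_right_mono mult_left_mono) (auto simp: d)
  also have "\<dots> = (real (card I) - l) / d"
    using \<open>d > 0\<close> assms(2) by (simp add: field_simps power2_eq_square)
  finally have "l / d \<le> real (card I) / d - (l + 2) * s / d ^ 2"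
    by (simp add: diff_divide_distrib)
  then have "p ^ 2 * (l / d) \<le> p ^ 2 * (real (card I) / d - (l + 2) * s / d ^ 2)"
    by (rule mult_left_mono) simp
  then have "l * (p ^ 2 / d) - (1 / l) * (\<Sum>b\<in>I. (a b) ^ 2)
      \<le> p ^ 2 * (real (card I) / d - (l + 2) * s / d ^ 2) - (1 / l) * (\<Sum>b\<in>I. (a b) ^ 2)"
    by (simp add: ac_simps)
  also have "\<dots> = (\<Sum>b\<in>I. p ^ 2 * (1 / d - (l + 2) * (c b) ^ 2 / d ^ 2) - (a b) ^ 2 / l)"
    by (simp add: s_def sum_subtractf sum_distrib_left sum_divide_distrib right_diff_distrib)
  also have "\<dots> \<le> (\<Sum>b\<in>I. 2 * p * a b * (c b / d) + p ^ 2 * (1 / d - 2 * (c b) ^ 2 / d ^ 2))"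
  proof (rule sum_mono)
    fix b
    have "0 \<le> (l * p * c b / d + a b) ^ 2 / l"
      using \<open>l > 0\<close> by simp
    also have "\<dots> = 2 * p * a b * (c b / d) + l * p ^ 2 * (c b) ^ 2 / d ^ 2 + (a b) ^ 2 / l"
      using \<open>l > 0\<close> \<open>d > 0\<close> by (simp add: field_simps power2_eq_square)
    moreover have "2 * p * a b * (c b / d) + p ^ 2 * (1 / d - 2 * (c b) ^ 2 / d ^ 2)
        - (p ^ 2 * (1 / d - (l + 2) * (c b) ^ 2 / d ^ 2) - (a b) ^ 2 / l)
        = 2 * p * a b * (c b / d) + l * p ^ 2 * (c b) ^ 2 / d ^ 2 + (a b) ^ 2 / l"
      by (simp add: algebra_simps diff_divide_distrib add_divide_distrib)
    ultimately show "p ^ 2 * (1 / d - (l + 2) * (c b) ^ 2 / d ^ 2) - (a b) ^ 2 / l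
        \<le> 2 * p * a b * (c b / d) + p ^ 2 * (1 / d - 2 * (c b) ^ 2 / d ^ 2)"
      by linarith
  qed
  finally show ?thesis .
qed

lemma integral_hardy_divergence_eq_0:
  fixes \<psi> :: "'a::euclidean_space \<Rightarrow> real" and \<psi>' :: "'a \<Rightarrow> 'a \<Rightarrow> real" and y :: 'a and \<epsilon> :: real
  assumes deriv: "\<And>x. (\<psi> has_derivative \<psi>' x) (at x)"
    and deriv_cont: "\<And>v. continuous_on UNIV (\<lambda>x. \<psi>' x v)"
    and "compact K" and supp: "\<And>x. x \<notin> K \<Longrightarrow> \<psi> x = 0" and "\<epsilon> > 0"
  defines "d \<equiv> \<lambda>x. (norm (x - y)) ^ 2 + \<epsilon>"
  defines "D \<equiv> \<lambda>x. \<Sum>b\<in>Basis. 2 * \<psi> x * \<psi>' x b * ((x - y) \<bullet> b / d x)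
    + \<psi> x ^ 2 * (1 / d x - 2 * ((x - y) \<bullet> b) ^ 2 / (d x) ^ 2)"
  shows "integrable lborel D" and "(\<integral>x. D x \<partial>lborel) = 0"
proof -
  have d_nonzero: "d x \<noteq> 0" for x
    using add_nonneg_pos[OF zero_le_power2[of "norm (x - y)"] \<open>\<epsilon> > 0\<close>] unfolding d_def by simp
  have d_cont: "continuous_on UNIV d"
    unfolding d_def by (intro continuous_intros)
  have \<psi>_cont: "continuous_on UNIV \<psi>"
    using deriv by (intro continuous_at_imp_continuous_on) (auto intro: has_derivative_continuous)
  define Db where "Db b x = 2 * \<psi> x * \<psi>' x b * ((x - y) \<bullet> b / d x)
      + \<psi> x ^ 2 * (1 / d x - 2 * ((x - y) \<bullet> b) ^ 2 / (d x) ^ 2)" for b x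
  have Db_cont: "continuous_on UNIV (Db b)" for b
    unfolding Db_def using d_nonzero by (intro continuous_intros deriv_cont \<psi>_cont d_cont) auto
  have Db_supp: "Db b x = 0" if "x \<notin> K" for b x
    using supp[OF that] by (simp add: Db_def)
  have Db_int: "integrable lborel (Db b)" for b
    using Db_cont Db_supp by (rule integrable_continuous_compact_support[OF _ \<open>compact K\<close>])
  have Db_zero: "(\<integral>x. Db b x \<partial>lborel) = 0" if "b \<in> Basis" for b
  proof (rule integral_directional_derivative_eq_0[OF _ Db_cont \<open>compact K\<close> _ Db_supp])
    show "continuous_on UNIV (\<lambda>x. \<psi> x ^ 2 * ((x - y) \<bullet> b / d x))"
      using d_nonzero by (intro continuous_intros \<psi>_cont d_cont) auto
    show "\<psi> x ^ 2 * ((x - y) \<bullet> b / d x) = 0" if "x \<notin> K" for x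
      using supp[OF that] by simp
    show "((\<lambda>t. \<psi> (x + t *\<^sub>R b) ^ 2 * ((x + t *\<^sub>R b - y) \<bullet> b / d (x + t *\<^sub>R b)))
        has_real_derivative Db b x) (at 0)" for x
      unfolding Db_def d_def by (rule has_field_derivative_hardy_field[OF deriv \<open>b \<in> Basis\<close> \<open>\<epsilon> > 0\<close>])
  qed
  have D_eq: "D = (\<lambda>x. \<Sum>b\<in>Basis. Db b x)"
    by (simp add: D_def Db_def)
  show "integrable lborel D"
    unfolding D_eq using Db_int by simp
  show "(\<integral>x. D x \<partial>lborel) = 0"
    unfolding D_eq using Db_int Db_zero by (simp add: integral_sum)
qed

lemma hardy_inequality_regularized:
  fixes \<psi> :: "'a::euclidean_space \<Rightarrow> real" and \<psi>' :: "'a \<Rightarrow> 'a \<Rightarrow> real"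
  assumes "DIM('a) \<ge> 3"
    and deriv: "\<And>x. (\<psi> has_derivative \<psi>' x) (at x)"
    and deriv_cont: "\<And>v. continuous_on UNIV (\<lambda>x. \<psi>' x v)"
    and "compact K" and supp: "\<And>x. x \<notin> K \<Longrightarrow> \<psi> x = 0" and "\<epsilon> > 0"
  shows "integrable lborel (\<lambda>x. \<psi> x ^ 2 / ((norm (x - y)) ^ 2 + \<epsilon>))"
    and "(\<integral>x. \<psi> x ^ 2 / ((norm (x - y)) ^ 2 + \<epsilon>) \<partial>lborel)
          \<le> 4 / (real DIM('a) - 2) ^ 2 * (\<integral>x. (\<Sum>b\<in>Basis. (\<psi>' x b) ^ 2) \<partial>lborel)"
proof -
  define d where "d x = (norm (x - y)) ^ 2 + \<epsilon>" for x
  define F where "F x = \<psi> x ^ 2 / d x" for x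
  define G where "G x = (\<Sum>b\<in>Basis. (\<psi>' x b) ^ 2)" for x
  define D where "D x = (\<Sum>b\<in>Basis. 2 * \<psi> x * \<psi>' x b * ((x - y) \<bullet> b / d x)
      + \<psi> x ^ 2 * (1 / d x - 2 * ((x - y) \<bullet> b) ^ 2 / (d x) ^ 2))" for x
  note divergence = integral_hardy_divergence_eq_0[OF deriv deriv_cont \<open>compact K\<close> supp \<open>\<epsilon> > 0\<close>, of y]
  have D_int: "integrable lborel D"
    unfolding D_def d_def by (rule divergence(1))
  have D_zero: "(\<integral>x. D x \<partial>lborel) = 0"
    unfolding D_def d_def by (rule divergence(2))
  have F_int: "integrable lborel F"
  proof (rule integrable_continuous_compact_support[OF _ \<open>compact K\<close>])
    have "d x \<noteq> 0" for x
      using add_nonneg_pos[OF zero_le_power2[of "norm (x - y)"] \<open>\<epsilon> > 0\<close>] unfolding d_def by simp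
    then show "continuous_on UNIV F"
      unfolding F_def d_def using deriv
      by (intro continuous_intros continuous_at_imp_continuous_on)
        (auto intro: has_derivative_continuous)
    show "F x = 0" if "x \<notin> K" for x
      using supp[OF that] by (simp add: F_def)
  qed
  have G_int: "integrable lborel G"
  proof (rule integrable_continuous_compact_support[OF _ \<open>compact K\<close>])
    show "continuous_on UNIV G"
      unfolding G_def by (intro continuous_intros deriv_cont)
    show "G x = 0" if "x \<notin> K" for x
      using has_derivative_eq_0_outside_closed[OF deriv compact_imp_closed[OF \<open>compact K\<close>] that supp]
      by (simp add: G_def)
  qed
  define l where "l = (real DIM('a) - 2) / 2"
  have "l > 0"
    unfolding l_def using \<open>DIM('a) \<ge> 3\<close> by simp
  have card_Basis: "real DIM('a) = 2 * l + 2"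
    unfolding l_def by (simp add: field_simps)
  have "l * F x - (1 / l) * G x \<le> D x" for x
  proof -
    have "(\<Sum>b\<in>Basis. ((x - y) \<bullet> b) ^ 2) = (norm (x - y)) ^ 2"
      unfolding power2_norm_eq_inner euclidean_inner[of "x - y" "x - y"] by (simp add: power2_eq_square)
    then show ?thesis
      using hardy_divergence_lower_bound[where I = Basis and c = "\<lambda>b. (x - y) \<bullet> b" and p = "\<psi> x"
          and a = "\<psi>' x", OF finite_Basis card_Basis \<open>l > 0\<close> \<open>\<epsilon> > 0\<close>]
      by (simp add: F_def G_def D_def d_def)
  qed
  then have "(\<integral>x. l * F x - (1 / l) * G x \<partial>lborel) \<le> (\<integral>x. D x \<partial>lborel)"
    using F_int G_int D_int by (intro integral_mono) auto
  then have "(\<integral>x. F x \<partial>lborel) \<le> (1 / l ^ 2) * (\<integral>x. G x \<partial>lborel)"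
    using F_int G_int D_zero \<open>l > 0\<close> by (simp add: field_simps power2_eq_square)
  then show "(\<integral>x. \<psi> x ^ 2 / ((norm (x - y)) ^ 2 + \<epsilon>) \<partial>lborel)
      \<le> 4 / (real DIM('a) - 2) ^ 2 * (\<integral>x. (\<Sum>b\<in>Basis. (\<psi>' x b) ^ 2) \<partial>lborel)"
    by (simp add: F_def G_def d_def l_def power_divide)
  show "integrable lborel (\<lambda>x. \<psi> x ^ 2 / ((norm (x - y)) ^ 2 + \<epsilon>))"
    using F_int unfolding F_def d_def .
qed

lemma Ck_diff:
  assumes "Ck k f" and "Ck k g"
  shows "Ck k (\<lambda>x. f x - g x)"
  using assms
proof (induction k arbitrary: f g)
  case 0
  then show ?case
    by (simp add: continuous_on_diff)
next
  case (Suc k)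
  then obtain f' g' where "\<forall>x. (f has_derivative f' x) (at x)" "\<forall>v. Ck k (\<lambda>x. f' x v)"
    and "\<forall>x. (g has_derivative g' x) (at x)" "\<forall>v. Ck k (\<lambda>x. g' x v)"
    by auto
  then show ?case
    by (auto intro!: exI[of _ "\<lambda>x v. f' x v - g' x v"] has_derivative_diff Suc.IH)
qed

lemma Cc_inf_diff:
  assumes "\<phi> \<in> Cc_inf" and "\<eta> \<in> Cc_inf"
  shows "(\<lambda>x. \<phi> x - \<eta> x) \<in> Cc_inf"
proof -
  have "{x. \<phi> x - \<eta> x \<noteq> 0} \<subseteq> {x. \<phi> x \<noteq> 0} \<union> {x. \<eta> x \<noteq> 0}"
    by auto
  then have "closure {x. \<phi> x - \<eta> x \<noteq> 0} \<subseteq> closure {x. \<phi> x \<noteq> 0} \<union> closure {x. \<eta> x \<noteq> 0}"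
    unfolding closure_Un[symmetric] by (rule closure_mono)
  moreover have "compact (closure {x. \<phi> x \<noteq> 0} \<union> closure {x. \<eta> x \<noteq> 0})"
    using assms by (simp add: Cc_inf_def compact_Un)
  ultimately have "bounded (closure {x. \<phi> x - \<eta> x \<noteq> 0})"
    using bounded_subset compact_imp_bounded by blast
  then have "compact (closure {x. \<phi> x - \<eta> x \<noteq> 0})"
    by (simp add: compact_eq_bounded_closed)
  with assms show ?thesis
    by (simp add: Cc_inf_def smooth_def Ck_diff)
qed

lemma Cc_inf_imp_C1:
  assumes "\<phi> \<in> Cc_inf"
  obtains \<phi>' where "\<And>x. (\<phi> has_derivative \<phi>' x) (at x)" and "\<And>v. continuous_on UNIV (\<lambda>x. \<phi>' x v)"
proof -
  have "Ck (Suc 0) \<phi>"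
    using assms by (simp add: Cc_inf_def smooth_def)
  then show ?thesis
    using that by auto
qed

lemma eq_0_outside_closure_support:
  "x \<notin> closure {x. \<phi> x \<noteq> 0} \<Longrightarrow> \<phi> x = 0"
  using closure_subset[of "{x. \<phi> x \<noteq> 0}"] by auto

lemma Cc_inf_continuous:
  assumes "\<phi> \<in> Cc_inf"
  shows "continuous_on UNIV \<phi>"
proof -
  obtain \<phi>' where "\<And>x. (\<phi> has_derivative \<phi>' x) (at x)"
    using Cc_inf_imp_C1[OF assms] by blast
  then show ?thesis
    by (intro continuous_at_imp_continuous_on) (auto intro: has_derivative_continuous)
qed

lemma Cc_inf_measurable:
  "\<phi> \<in> Cc_inf \<Longrightarrow> \<phi> \<in> borel_measurable lebesgue"
  using borel_measurable_continuous_onI[OF Cc_inf_continuous] by (intro measurable_completion) simp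

lemma Cc_inf_bounded:
  assumes "\<phi> \<in> Cc_inf"
  obtains B where "\<And>x. \<bar>\<phi> x\<bar> \<le> B"
proof -
  have "compact (closure {x. \<phi> x \<noteq> 0})"
    using assms by (simp add: Cc_inf_def)
  from continuous_compact_support_bounded[OF Cc_inf_continuous[OF assms] this
      eq_0_outside_closure_support[of _ \<phi>]]
  show thesis
    using that by blast
qed

lemma hardy_inequality_Cc_inf:
  fixes \<psi> :: "'a::euclidean_space \<Rightarrow> real"
  assumes "DIM('a) \<ge> 3" and "\<psi> \<in> Cc_inf" and "\<epsilon> > 0"
  shows "(\<integral>\<^sup>+x. ennreal (\<psi> x ^ 2 / ((norm (x - y)) ^ 2 + \<epsilon>)) \<partial>lebesgue)
    \<le> ennreal (4 / (real DIM('a) - 2) ^ 2 * dirichlet \<psi>)"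
proof -
  obtain \<psi>' where deriv: "\<And>x. (\<psi> has_derivative \<psi>' x) (at x)"
    and deriv_cont: "\<And>v. continuous_on UNIV (\<lambda>x. \<psi>' x v)"
    using Cc_inf_imp_C1[OF \<open>\<psi> \<in> Cc_inf\<close>] by blast
  have "compact (closure {x. \<psi> x \<noteq> 0})"
    using \<open>\<psi> \<in> Cc_inf\<close> by (simp add: Cc_inf_def)
  note hardy = hardy_inequality_regularized[OF \<open>DIM('a) \<ge> 3\<close> deriv deriv_cont this
      eq_0_outside_closure_support[of _ \<psi>] \<open>\<epsilon> > 0\<close>, of y]
  have "dirichlet \<psi> = (\<integral>x. (\<Sum>b\<in>Basis. (\<psi>' x b) ^ 2) \<partial>lebesgue)"
    unfolding dirichlet_def by (simp add: frechet_derivative_at[OF deriv, symmetric])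
  also have "\<dots> = (\<integral>x. (\<Sum>b\<in>Basis. (\<psi>' x b) ^ 2) \<partial>lborel)"
    by (intro integral_completion)
      (simp add: borel_measurable_continuous_onI continuous_intros deriv_cont)
  finally have dirichlet_eq: "dirichlet \<psi> = (\<integral>x. (\<Sum>b\<in>Basis. (\<psi>' x b) ^ 2) \<partial>lborel)" .
  have "(\<integral>\<^sup>+x. ennreal (\<psi> x ^ 2 / ((norm (x - y)) ^ 2 + \<epsilon>)) \<partial>lebesgue)
      = ennreal (\<integral>x. \<psi> x ^ 2 / ((norm (x - y)) ^ 2 + \<epsilon>) \<partial>lborel)"
    using \<open>\<epsilon> > 0\<close> unfolding nn_integral_completion
    by (intro nn_integral_eq_integral hardy(1) AE_I2 divide_nonneg_nonneg add_nonneg_nonneg) auto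
  also have "\<dots> \<le> ennreal (4 / (real DIM('a) - 2) ^ 2 * dirichlet \<psi>)"
    unfolding dirichlet_eq by (rule ennreal_leI[OF hardy(2)])
  finally show ?thesis .
qed

section \<open>Approximation of functions in D12\<close>

lemma hardy_inequality_AE_limit:
  fixes u :: "'a::euclidean_space \<Rightarrow> real" and \<phi> :: "nat \<Rightarrow> 'a \<Rightarrow> real"
  assumes "DIM('a) \<ge> 3" and \<phi>: "\<And>n. \<phi> n \<in> Cc_inf" and "\<eta> \<in> Cc_inf"
    and lim: "AE x in lebesgue. (\<lambda>n. \<phi> n x) \<longlonglongrightarrow> u x"
    and energy: "\<forall>\<^sub>F n in sequentially. dirichlet (\<lambda>x. \<phi> n x - \<eta> x) \<le> c"
  shows "(\<integral>\<^sup>+x. ennreal ((u x - \<eta> x) ^ 2 / (norm (x - y)) ^ 2) \<partial>lebesgue)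
    \<le> ennreal (4 / (real DIM('a) - 2) ^ 2 * c)"
proof (rule nn_integral_le_of_AE_le_liminf)
  define f where "f n x = ennreal ((\<phi> n x - \<eta> x) ^ 2 / ((norm (x - y)) ^ 2 + 1 / Suc n))" for n x
  show "f n \<in> borel_measurable lebesgue" for n
  proof -
    note [measurable] = borel_measurable_lebesgue_ident Cc_inf_measurable[OF \<phi>]
      Cc_inf_measurable[OF \<open>\<eta> \<in> Cc_inf\<close>]
    show ?thesis
      unfolding f_def by measurable
  qed
  show "AE x in lebesgue. ennreal ((u x - \<eta> x) ^ 2 / (norm (x - y)) ^ 2) \<le> liminf (\<lambda>n. f n x)"
    using lim
  proof eventually_elim
    case (elim x)
    show ?case
    proof (cases "x = y")
      case False
      have "(\<lambda>n. (\<phi> n x - \<eta> x) ^ 2 / ((norm (x - y)) ^ 2 + 1 / Suc n))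
          \<longlonglongrightarrow> (u x - \<eta> x) ^ 2 / ((norm (x - y)) ^ 2 + 0)"
        using False by (intro tendsto_intros elim LIMSEQ_Suc[OF lim_inverse_n']) auto
      then have "(\<lambda>n. f n x) \<longlonglongrightarrow> ennreal ((u x - \<eta> x) ^ 2 / (norm (x - y)) ^ 2)"
        unfolding f_def by (intro tendsto_ennrealI) simp
      then show ?thesis
        by (simp add: lim_imp_Liminf)
    qed simp \<comment> \<open>at \<open>x = y\<close> the left-hand side is the junk value \<open>(u x - \<eta> x)\<^sup>2 / 0 = 0\<close>\<close>
  qed
  show "\<forall>\<^sub>F n in sequentially. (\<integral>\<^sup>+x. f n x \<partial>lebesgue) \<le> ennreal (4 / (real DIM('a) - 2) ^ 2 * c)"
    using energy
  proof eventually_elim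
    case (elim n)
    have "(\<integral>\<^sup>+x. f n x \<partial>lebesgue) \<le> ennreal (4 / (real DIM('a) - 2) ^ 2 * dirichlet (\<lambda>x. \<phi> n x - \<eta> x))"
      unfolding f_def
      by (rule hardy_inequality_Cc_inf[OF \<open>DIM('a) \<ge> 3\<close> Cc_inf_diff[OF \<phi> \<open>\<eta> \<in> Cc_inf\<close>]]) simp
    also have "\<dots> \<le> ennreal (4 / (real DIM('a) - 2) ^ 2 * c)"
      using elim by (intro ennreal_leI mult_left_mono) auto
    finally show ?case .
  qed
qed

lemma D12_hardy_approximation:
  fixes u :: "'a::euclidean_space \<Rightarrow> real"
  assumes "DIM('a) \<ge> 3" and "u \<in> D12"
  obtains \<phi> :: "nat \<Rightarrow> 'a \<Rightarrow> real" where "\<And>n. \<phi> n \<in> Cc_inf"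
    and "\<And>e. e > 0 \<Longrightarrow> \<forall>\<^sub>F m in sequentially. \<forall>y.
      (\<integral>\<^sup>+x. ennreal ((u x - \<phi> m x) ^ 2 / (norm (x - y)) ^ 2) \<partial>lebesgue) \<le> ennreal e"
proof -
  obtain \<phi> :: "nat \<Rightarrow> 'a \<Rightarrow> real" where u_meas: "u \<in> borel_measurable lebesgue"
    and \<phi>: "\<And>n. \<phi> n \<in> Cc_inf"
    and cauchy: "\<forall>e>0. \<exists>M. \<forall>m\<ge>M. \<forall>n\<ge>M. dirichlet (\<lambda>x. \<phi> m x - \<phi> n x) < e"
    and lim: "(\<lambda>n. \<integral>\<^sup>+x. ennreal (\<bar>\<phi> n x - u x\<bar> powr (2 * real DIM('a) / (real DIM('a) - 2))) \<partial>lebesgue)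
      \<longlonglongrightarrow> 0"
    using \<open>u \<in> D12\<close> unfolding D12_def by blast
  obtain s where "strict_mono s" and ae_lim: "AE x in lebesgue. (\<lambda>n. \<phi> (s n) x) \<longlonglongrightarrow> u x"
    using Lp_convergence_imp_AE_subseq[OF _ u_meas Cc_inf_measurable[OF \<phi>] lim] \<open>DIM('a) \<ge> 3\<close>
    by auto
  define C where "C = 4 / (real DIM('a) - 2) ^ 2"
  have "C \<ge> 0"
    by (simp add: C_def)
  have approx: "\<forall>\<^sub>F m in sequentially. \<forall>y.
      (\<integral>\<^sup>+x. ennreal ((u x - \<phi> m x) ^ 2 / (norm (x - y)) ^ 2) \<partial>lebesgue) \<le> ennreal e"
    if "e > 0" for e
  proof -
    have "e / (C + 1) > 0"
      using \<open>e > 0\<close> \<open>C \<ge> 0\<close> by simp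
    then obtain M where M: "\<And>m n. m \<ge> M \<Longrightarrow> n \<ge> M \<Longrightarrow> dirichlet (\<lambda>x. \<phi> m x - \<phi> n x) < e / (C + 1)"
      using cauchy by blast
    show ?thesis
    proof (rule eventually_sequentiallyI[of M], intro allI)
      fix m y
      assume "M \<le> m"
      have "\<forall>\<^sub>F n in sequentially. dirichlet (\<lambda>x. \<phi> (s n) x - \<phi> m x) \<le> e / (C + 1)"
      proof (rule eventually_sequentiallyI[of M])
        fix n
        assume "M \<le> n"
        then show "dirichlet (\<lambda>x. \<phi> (s n) x - \<phi> m x) \<le> e / (C + 1)"
          using M[of "s n" m] seq_suble[OF \<open>strict_mono s\<close>, of n] \<open>M \<le> m\<close> by simp
      qed
      then have "(\<integral>\<^sup>+x. ennreal ((u x - \<phi> m x) ^ 2 / (norm (x - y)) ^ 2) \<partial>lebesgue)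
          \<le> ennreal (C * (e / (C + 1)))"
        unfolding C_def by (rule hardy_inequality_AE_limit[OF \<open>DIM('a) \<ge> 3\<close> \<phi> \<phi> ae_lim])
      also have "\<dots> \<le> ennreal e"
        using \<open>e > 0\<close> \<open>C \<ge> 0\<close> by (intro ennreal_leI) (simp add: field_simps)
      finally show "(\<integral>\<^sup>+x. ennreal ((u x - \<phi> m x) ^ 2 / (norm (x - y)) ^ 2) \<partial>lebesgue) \<le> ennreal e" .
    qed
  qed
  show thesis
    by (rule that[of \<phi>, OF \<phi> approx])
qed

section \<open>The weighted integral over a moving ball\<close>

definition hardy_ball_integral :: "real \<Rightarrow> ('a::euclidean_space \<Rightarrow> real) \<Rightarrow> 'a \<Rightarrow> real" where
  "hardy_ball_integral r v y = (\<integral>x\<in>ball y r. (v x) ^ 2 / (norm (x - y)) ^ 2 \<partial>lebesgue)"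

lemma hardy_ball_integral_translate:
  fixes v :: "'a::euclidean_space \<Rightarrow> real"
  assumes "v \<in> borel_measurable borel"
  shows "hardy_ball_integral r v y = (\<integral>z\<in>ball 0 r. (v (y + z)) ^ 2 / (norm z) ^ 2 \<partial>lborel)"
  using set_integral_ball_translate[of "\<lambda>x. (v x) ^ 2 / (norm (x - y)) ^ 2" y r] assms
  by (simp add: hardy_ball_integral_def)

lemma hardy_ball_integral_bounded:
  fixes v :: "'a::euclidean_space \<Rightarrow> real"
  assumes "DIM('a) \<ge> 3" and "v \<in> borel_measurable borel" and bound: "\<And>x. \<bar>v x\<bar> \<le> B"
  shows "set_integrable lebesgue (ball y r) (\<lambda>x. (v x) ^ 2 / (norm (x - y)) ^ 2)"
    and "hardy_ball_integral r v y \<le> B ^ 2 * (\<integral>z\<in>ball (0::'a) r. 1 / (norm z) ^ 2 \<partial>lborel)"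
proof -
  note [measurable] = assms(2)
  have [measurable]: "ball (0::'a) r \<in> sets borel"
    by simp
  have dominant: "set_integrable lborel (ball (0::'a) r) (\<lambda>z. B ^ 2 * (1 / (norm z) ^ 2))"
    using \<open>DIM('a) \<ge> 3\<close> by (intro set_integrable_mult_right set_integrable_ball_inverse_power) simp
  have square_le: "(v x) ^ 2 \<le> B ^ 2" for x
    using power_mono[OF bound[of x] abs_ge_zero, of 2] by simp
  have dominated: "(v (y + z)) ^ 2 / (norm z) ^ 2 \<le> B ^ 2 * (1 / (norm z) ^ 2)" for z
    using square_le[of "y + z"] by (simp add: divide_right_mono)
  have translated_int: "set_integrable lborel (ball 0 r) (\<lambda>z. (v (y + z)) ^ 2 / (norm z) ^ 2)"
    by (rule set_integrable_bound[OF dominant]) (use dominated in \<open>auto simp: set_borel_measurable_def\<close>)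
  then show "set_integrable lebesgue (ball y r) (\<lambda>x. (v x) ^ 2 / (norm (x - y)) ^ 2)"
    by (subst set_integrable_ball_translate_iff) auto
  have "hardy_ball_integral r v y = (\<integral>z\<in>ball 0 r. (v (y + z)) ^ 2 / (norm z) ^ 2 \<partial>lborel)"
    by (rule hardy_ball_integral_translate[OF assms(2)])
  also have "\<dots> \<le> (\<integral>z\<in>ball (0::'a) r. B ^ 2 * (1 / (norm z) ^ 2) \<partial>lborel)"
    using translated_int dominant dominated by (intro set_integral_mono)
  also have "\<dots> = B ^ 2 * (\<integral>z\<in>ball (0::'a) r. 1 / (norm z) ^ 2 \<partial>lborel)"
    by (rule set_integral_mult_right)
  finally show "hardy_ball_integral r v y \<le> B ^ 2 * (\<integral>z\<in>ball (0::'a) r. 1 / (norm z) ^ 2 \<partial>lborel)" .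
qed

lemma continuous_on_hardy_ball_integral:
  fixes v :: "'a::euclidean_space \<Rightarrow> real"
  assumes "DIM('a) \<ge> 3" and v_cont: "continuous_on UNIV v" and bound: "\<And>x. \<bar>v x\<bar> \<le> B"
  shows "continuous_on UNIV (hardy_ball_integral r v)"
proof -
  have v_meas [measurable]: "v \<in> borel_measurable borel"
    using v_cont by (rule borel_measurable_continuous_onI)
  have [measurable]: "ball (0::'a) r \<in> sets borel"
    by simp
  have "(\<lambda>n. hardy_ball_integral r v (X n)) \<longlonglongrightarrow> hardy_ball_integral r v a"
    if "X \<longlonglongrightarrow> a" for X a
    unfolding hardy_ball_integral_translate[OF v_meas] set_lebesgue_integral_def
  proof (rule integral_dominated_convergence)
    have "set_integrable lborel (ball (0::'a) r) (\<lambda>z. B ^ 2 * (1 / (norm z) ^ 2))"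
      using \<open>DIM('a) \<ge> 3\<close> by (intro set_integrable_mult_right set_integrable_ball_inverse_power) simp
    then show "integrable lborel (\<lambda>z. indicator (ball (0::'a) r) z *\<^sub>R (B ^ 2 * (1 / (norm z) ^ 2)))"
      unfolding set_integrable_def .
    show "AE z in lborel. (\<lambda>n. indicator (ball 0 r) z *\<^sub>R ((v (X n + z)) ^ 2 / (norm z) ^ 2))
        \<longlonglongrightarrow> indicator (ball 0 r) z *\<^sub>R ((v (a + z)) ^ 2 / (norm z) ^ 2)"
    proof (intro AE_I2)
      fix z
      have "(\<lambda>n. v (X n + z)) \<longlonglongrightarrow> v (a + z)"
        using that by (intro continuous_on_tendsto_compose[OF v_cont] tendsto_intros) auto
      then show "(\<lambda>n. indicator (ball 0 r) z *\<^sub>R ((v (X n + z)) ^ 2 / (norm z) ^ 2))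
          \<longlonglongrightarrow> indicator (ball 0 r) z *\<^sub>R ((v (a + z)) ^ 2 / (norm z) ^ 2)"
        by (cases "z = 0") (auto intro!: tendsto_intros)
    qed
    show "AE z in lborel. norm (indicator (ball 0 r) z *\<^sub>R ((v (X n + z)) ^ 2 / (norm z) ^ 2))
        \<le> indicator (ball 0 r) z *\<^sub>R (B ^ 2 * (1 / (norm z) ^ 2))" for n
    proof (intro AE_I2)
      fix z
      have "(v (X n + z)) ^ 2 \<le> B ^ 2"
        using power_mono[OF bound[of "X n + z"] abs_ge_zero, of 2] by simp
      then show "norm (indicator (ball 0 r) z *\<^sub>R ((v (X n + z)) ^ 2 / (norm z) ^ 2))
          \<le> indicator (ball 0 r) z *\<^sub>R (B ^ 2 * (1 / (norm z) ^ 2))"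
        by (simp add: indicator_def divide_right_mono)
    qed
  qed measurable
  then show ?thesis
    by (auto simp: continuous_on_eq_continuous_at continuous_at_sequentially comp_def)
qed

lemma hardy_ball_integral_le_of_nn_integral_le:
  fixes v :: "'a::euclidean_space \<Rightarrow> real"
  assumes "v \<in> borel_measurable lebesgue" and "c \<ge> 0"
    and nn_bound: "(\<integral>\<^sup>+x. ennreal ((v x) ^ 2 / (norm (x - y)) ^ 2) \<partial>lebesgue) \<le> ennreal c"
  shows "set_integrable lebesgue (ball y r) (\<lambda>x. (v x) ^ 2 / (norm (x - y)) ^ 2)"
    and "hardy_ball_integral r v y \<le> c"
proof -
  define f where "f x = indicator (ball y r) x *\<^sub>R ((v x) ^ 2 / (norm (x - y)) ^ 2)" for x
  have f_meas: "f \<in> borel_measurable lebesgue"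
  proof -
    note [measurable] = borel_measurable_lebesgue_ident
    have [measurable]: "ball y r \<in> sets lebesgue"
      by simp
    show ?thesis
      unfolding f_def using assms(1) by measurable
  qed
  have "(\<integral>\<^sup>+x. ennreal (f x) \<partial>lebesgue) \<le> ennreal c"
    using nn_bound by (elim order_trans[rotated]) (auto intro!: nn_integral_mono simp: f_def indicator_def)
  moreover have "norm (f x) = f x" for x
    by (simp add: f_def)
  ultimately have "integrable lebesgue f"
    using f_meas by (intro integrableI_bounded) (auto intro: le_less_trans simp: top.not_eq_extremum)
  moreover have "integral\<^sup>L lebesgue f \<le> c"
    using \<open>c \<ge> 0\<close> \<open>(\<integral>\<^sup>+x. ennreal (f x) \<partial>lebesgue) \<le> ennreal c\<close> by (rule integral_real_bounded)
  ultimately show "set_integrable lebesgue (ball y r) (\<lambda>x. (v x) ^ 2 / (norm (x - y)) ^ 2)"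
    and "hardy_ball_integral r v y \<le> c"
    unfolding set_integrable_def hardy_ball_integral_def set_lebesgue_integral_def f_def .
qed

lemma abs_diff_power2_le:
  fixes v w t :: real
  assumes "t > 0"
  shows "\<bar>v ^ 2 - w ^ 2\<bar> \<le> t * w ^ 2 + (1 + 1 / t) * (w - v) ^ 2"
proof -
  define d where "d = w - v"
  have "0 \<le> (t * \<bar>w\<bar> - \<bar>d\<bar>) ^ 2 / t"
    using \<open>t > 0\<close> by simp
  also have "\<dots> = t * w ^ 2 + d ^ 2 / t - 2 * \<bar>w * d\<bar>"
    using \<open>t > 0\<close> by (simp add: field_simps power2_eq_square abs_mult)
  finally have "2 * \<bar>w * d\<bar> \<le> t * w ^ 2 + d ^ 2 / t"
    by simp
  moreover have "v ^ 2 - w ^ 2 = d ^ 2 - 2 * (w * d)"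
    by (simp add: d_def power2_eq_square algebra_simps)
  moreover have "(1 + 1 / t) * d ^ 2 = d ^ 2 + d ^ 2 / t"
    by (simp add: distrib_right)
  ultimately show ?thesis
    unfolding d_def[symmetric] by (simp add: abs_le_iff) (smt (verit) abs_ge_self abs_ge_minus_self zero_le_power2)
qed

lemma hardy_ball_integral_diff_le:
  fixes v w :: "'a::euclidean_space \<Rightarrow> real"
  assumes v_meas: "v \<in> borel_measurable lebesgue" and "t > 0"
    and w_int: "set_integrable lebesgue (ball y r) (\<lambda>x. (w x) ^ 2 / (norm (x - y)) ^ 2)"
    and diff_int: "set_integrable lebesgue (ball y r) (\<lambda>x. (w x - v x) ^ 2 / (norm (x - y)) ^ 2)"
  shows "set_integrable lebesgue (ball y r) (\<lambda>x. (v x) ^ 2 / (norm (x - y)) ^ 2)"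
    and "\<bar>hardy_ball_integral r v y - hardy_ball_integral r w y\<bar>
      \<le> t * hardy_ball_integral r w y + (1 + 1 / t) * hardy_ball_integral r (\<lambda>x. w x - v x) y"
proof -
  have V_meas: "set_borel_measurable lebesgue (ball y r) (\<lambda>x. (v x) ^ 2 / (norm (x - y)) ^ 2)"
  proof -
    note [measurable] = borel_measurable_lebesgue_ident v_meas
    have [measurable]: "ball y r \<in> sets lebesgue"
      by simp
    show ?thesis
      unfolding set_borel_measurable_def by measurable
  qed
  have "\<bar>(v x) ^ 2 / (norm (x - y)) ^ 2 - (w x) ^ 2 / (norm (x - y)) ^ 2\<bar>
      \<le> t * ((w x) ^ 2 / (norm (x - y)) ^ 2) + (1 + 1 / t) * ((w x - v x) ^ 2 / (norm (x - y)) ^ 2)" for x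
  proof -
    have "\<bar>(v x) ^ 2 / (norm (x - y)) ^ 2 - (w x) ^ 2 / (norm (x - y)) ^ 2\<bar>
        = \<bar>(v x) ^ 2 - (w x) ^ 2\<bar> / (norm (x - y)) ^ 2"
      by (simp add: diff_divide_distrib[symmetric])
    also have "\<dots> \<le> (t * (w x) ^ 2 + (1 + 1 / t) * (w x - v x) ^ 2) / (norm (x - y)) ^ 2"
      using abs_diff_power2_le[OF \<open>t > 0\<close>] by (rule divide_right_mono) simp
    finally show ?thesis
      by (simp add: add_divide_distrib)
  qed
  note bound = set_integral_abs_diff_le[OF V_meas w_int diff_int this]
  show "set_integrable lebesgue (ball y r) (\<lambda>x. (v x) ^ 2 / (norm (x - y)) ^ 2)"
    by (rule bound(1))
  show "\<bar>hardy_ball_integral r v y - hardy_ball_integral r w y\<bar>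
      \<le> t * hardy_ball_integral r w y + (1 + 1 / t) * hardy_ball_integral r (\<lambda>x. w x - v x) y"
    unfolding hardy_ball_integral_def by (rule bound(2))
qed

lemma hardy_ball_integral_uniformly_bounded:
  fixes u \<phi> :: "'a::euclidean_space \<Rightarrow> real"
  assumes "DIM('a) \<ge> 3" and u_meas: "u \<in> borel_measurable lebesgue" and "\<phi> \<in> Cc_inf"
    and diff_int: "\<And>y. set_integrable lebesgue (ball y r) (\<lambda>x. (u x - \<phi> x) ^ 2 / (norm (x - y)) ^ 2)"
    and diff_bound: "\<And>y. hardy_ball_integral r (\<lambda>x. u x - \<phi> x) y \<le> c"
  obtains B where "\<And>y. set_integrable lebesgue (ball y r) (\<lambda>x. (u x) ^ 2 / (norm (x - y)) ^ 2)"
    and "\<And>y. hardy_ball_integral r u y \<le> B"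
proof -
  obtain B0 where B0: "\<And>x. \<bar>\<phi> x\<bar> \<le> B0"
    using Cc_inf_bounded[OF \<open>\<phi> \<in> Cc_inf\<close>] by blast
  have \<phi>_borel: "\<phi> \<in> borel_measurable borel"
    by (rule borel_measurable_continuous_onI[OF Cc_inf_continuous[OF \<open>\<phi> \<in> Cc_inf\<close>]])
  define K where "K = (\<integral>z\<in>ball (0::'a) r. 1 / (norm z) ^ 2 \<partial>lborel)"
  have "set_integrable lebesgue (ball y r) (\<lambda>x. (u x) ^ 2 / (norm (x - y)) ^ 2)
      \<and> hardy_ball_integral r u y \<le> 2 * (B0 ^ 2 * K) + 2 * c" for y
  proof -
    have swap: "(\<lambda>x. (\<phi> x - u x) ^ 2 / (norm (x - y)) ^ 2) = (\<lambda>x. (u x - \<phi> x) ^ 2 / (norm (x - y)) ^ 2)"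
      by (simp add: power2_commute)
    have "set_integrable lebesgue (ball y r) (\<lambda>x. (\<phi> x - u x) ^ 2 / (norm (x - y)) ^ 2)"
      unfolding swap by (rule diff_int)
    note diff = hardy_ball_integral_diff_le[OF u_meas zero_less_one
        hardy_ball_integral_bounded(1)[OF \<open>DIM('a) \<ge> 3\<close> \<phi>_borel B0] this]
    have "hardy_ball_integral r (\<lambda>x. \<phi> x - u x) y = hardy_ball_integral r (\<lambda>x. u x - \<phi> x) y"
      unfolding hardy_ball_integral_def swap ..
    moreover have "hardy_ball_integral r \<phi> y \<le> B0 ^ 2 * K"
      unfolding K_def by (rule hardy_ball_integral_bounded(2)[OF \<open>DIM('a) \<ge> 3\<close> \<phi>_borel B0])
    ultimately show ?thesis
      using diff diff_bound[of y] by (auto simp: abs_le_iff)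
  qed
  then show thesis
    using that by blast
qed

lemma uniform_limit_hardy_ball_integral:
  fixes u :: "'a::euclidean_space \<Rightarrow> real" and \<phi> :: "nat \<Rightarrow> 'a \<Rightarrow> real"
  assumes \<phi>_meas: "\<And>m. \<phi> m \<in> borel_measurable lebesgue"
    and u_int: "\<And>y. set_integrable lebesgue (ball y r) (\<lambda>x. (u x) ^ 2 / (norm (x - y)) ^ 2)"
    and u_bound: "\<And>y. hardy_ball_integral r u y \<le> B"
    and close: "\<And>e. e > 0 \<Longrightarrow> \<forall>\<^sub>F m in sequentially. \<forall>y.
      set_integrable lebesgue (ball y r) (\<lambda>x. (u x - \<phi> m x) ^ 2 / (norm (x - y)) ^ 2)
      \<and> hardy_ball_integral r (\<lambda>x. u x - \<phi> m x) y \<le> e"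
  shows "uniform_limit UNIV (\<lambda>m. hardy_ball_integral r (\<phi> m)) (hardy_ball_integral r u) sequentially"
proof (rule uniform_limitI)
  fix \<epsilon> :: real
  assume "\<epsilon> > 0"
  define t where "t = \<epsilon> / (2 * (\<bar>B\<bar> + 1))"
  define c where "c = 1 + 1 / t"
  have "t > 0"
    using \<open>\<epsilon> > 0\<close> by (simp add: t_def)
  then have "c > 0"
    by (simp add: c_def add_pos_pos)
  have "t * B \<le> t * \<bar>B\<bar>"
    using \<open>t > 0\<close> by (intro mult_left_mono) auto
  also have "\<dots> < t * (\<bar>B\<bar> + 1)"
    using \<open>t > 0\<close> by simp
  also have "\<dots> = \<epsilon> / 2"
    unfolding t_def by (simp add: field_simps add_nonneg_pos)
  finally have "t * B < \<epsilon> / 2" .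
  have "\<epsilon> / (2 * c) > 0"
    using \<open>\<epsilon> > 0\<close> \<open>c > 0\<close> by simp
  from close[OF this]
  show "\<forall>\<^sub>F m in sequentially. \<forall>y\<in>UNIV. dist (hardy_ball_integral r (\<phi> m) y) (hardy_ball_integral r u y) < \<epsilon>"
  proof (rule eventually_mono)
    fix m
    assume close_m: "\<forall>y. set_integrable lebesgue (ball y r) (\<lambda>x. (u x - \<phi> m x) ^ 2 / (norm (x - y)) ^ 2)
      \<and> hardy_ball_integral r (\<lambda>x. u x - \<phi> m x) y \<le> \<epsilon> / (2 * c)"
    show "\<forall>y\<in>UNIV. dist (hardy_ball_integral r (\<phi> m) y) (hardy_ball_integral r u y) < \<epsilon>"
    proof
      fix y
      have "\<bar>hardy_ball_integral r (\<phi> m) y - hardy_ball_integral r u y\<bar>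
          \<le> t * hardy_ball_integral r u y + c * hardy_ball_integral r (\<lambda>x. u x - \<phi> m x) y"
        unfolding c_def using close_m
        by (intro hardy_ball_integral_diff_le(2)[OF \<phi>_meas \<open>t > 0\<close> u_int]) simp
      also have "\<dots> \<le> t * B + c * (\<epsilon> / (2 * c))"
        using close_m u_bound[of y] \<open>t > 0\<close> \<open>c > 0\<close> by (intro add_mono mult_left_mono) auto
      also have "\<dots> < \<epsilon>"
        using \<open>t * B < \<epsilon> / 2\<close> \<open>c > 0\<close> by simp
      finally show "dist (hardy_ball_integral r (\<phi> m) y) (hardy_ball_integral r u y) < \<epsilon>"
        by (simp add: dist_real_def)
    qed
  qed
qed

lemma continuous_on_hardy_ball_integral_D12:
  fixes u :: "'a::euclidean_space \<Rightarrow> real"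
  assumes "DIM('a) \<ge> 3" and "u \<in> D12"
  shows "continuous_on UNIV (hardy_ball_integral r u)"
proof -
  have u_meas: "u \<in> borel_measurable lebesgue"
    using \<open>u \<in> D12\<close> by (simp add: D12_def)
  obtain \<phi> :: "nat \<Rightarrow> 'a \<Rightarrow> real" where \<phi>: "\<And>n. \<phi> n \<in> Cc_inf"
    and approx: "\<And>e. e > 0 \<Longrightarrow> \<forall>\<^sub>F m in sequentially. \<forall>y.
      (\<integral>\<^sup>+x. ennreal ((u x - \<phi> m x) ^ 2 / (norm (x - y)) ^ 2) \<partial>lebesgue) \<le> ennreal e"
    using D12_hardy_approximation[OF assms] by blast
  have close: "\<forall>\<^sub>F m in sequentially. \<forall>y.
      set_integrable lebesgue (ball y r) (\<lambda>x. (u x - \<phi> m x) ^ 2 / (norm (x - y)) ^ 2)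
      \<and> hardy_ball_integral r (\<lambda>x. u x - \<phi> m x) y \<le> e" if "e > 0" for e
    using approx[OF that]
  proof eventually_elim
    case (elim m)
    have "(\<lambda>x. u x - \<phi> m x) \<in> borel_measurable lebesgue"
      using u_meas Cc_inf_measurable[OF \<phi>] by measurable
    then show ?case
      using hardy_ball_integral_le_of_nn_integral_le[OF _ less_imp_le[OF \<open>e > 0\<close>]] elim by blast
  qed
  obtain M where "\<And>y. set_integrable lebesgue (ball y r) (\<lambda>x. (u x - \<phi> M x) ^ 2 / (norm (x - y)) ^ 2)"
      "\<And>y. hardy_ball_integral r (\<lambda>x. u x - \<phi> M x) y \<le> 1"
    using close[of 1] by (auto simp: eventually_sequentially)
  then obtain B where u_int: "\<And>y. set_integrable lebesgue (ball y r) (\<lambda>x. (u x) ^ 2 / (norm (x - y)) ^ 2)"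
    and u_bound: "\<And>y. hardy_ball_integral r u y \<le> B"
    using hardy_ball_integral_uniformly_bounded[OF \<open>DIM('a) \<ge> 3\<close> u_meas \<phi>[of M]] by blast
  have "uniform_limit UNIV (\<lambda>m. hardy_ball_integral r (\<phi> m)) (hardy_ball_integral r u) sequentially"
    by (rule uniform_limit_hardy_ball_integral[OF Cc_inf_measurable[OF \<phi>] u_int u_bound close])
  moreover have "continuous_on UNIV (hardy_ball_integral r (\<phi> m))" for m
  proof -
    obtain B where "\<And>x. \<bar>\<phi> m x\<bar> \<le> B"
      using Cc_inf_bounded[OF \<phi>[of m]] by blast
    then show ?thesis
      by (rule continuous_on_hardy_ball_integral[OF \<open>DIM('a) \<ge> 3\<close> Cc_inf_continuous[OF \<phi>]])
  qed
  ultimately show ?thesis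
    by (intro uniform_limit_theorem[where F = sequentially and f = "\<lambda>m. hardy_ball_integral r (\<phi> m)"])
      simp_all
qed

theorem lemmaA3:
  fixes a :: "real ^ 'n" and r :: real and u :: "real ^ 'n \<Rightarrow> real"
  assumes "CARD('n) \<ge> 3" and "r > 0" and "u \<in> D12"
  shows "((\<lambda>y. \<integral>x\<in>ball y r. (u x)^2 / (norm (x - y))^2 \<partial>lebesgue) \<longlongrightarrow>
            (\<integral>x\<in>ball a r. (u x)^2 / (norm (x - a))^2 \<partial>lebesgue)) (at a)"
proof -
  have "continuous_on UNIV (hardy_ball_integral r u)"
    using assms(1,3) by (intro continuous_on_hardy_ball_integral_D12) simp_all
  then show ?thesis
    unfolding hardy_ball_integral_def[symmetric]
    by (simp add: continuous_on_eq_continuous_at isContD)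
qed

end
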